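(* Let $k\leq n/2$. Then the language $B^*_{n,k}=\{w \in \{0,1\}^* : |w|_1\geq k,\ |w|_0 \geq n-k\}$ requires regular expressions of length at least $\mathrm{rpn}(B^*_{n,k}) \geq nk^{\Omega( \log k)}$.
   Context: $|w|_a$ is the number of occurrences of letter $a$ in $w$. Regular expressions are built from $\epsilon$ and letters by union, concatenation and star (no $\emptyset$); $\mathrm{rpn}(L)$ is the minimum number of syntax-tree nodes of an expression describing $L$. Logarithms are base 2. *)

theory Defs
  imports Complex_Main
begin

datatype 'a rexp = Eps | Lit 'a | Plus "'a rexp" "'a rexp" | Times "'a rexp" "'a rexp" | Star "'a rexp"

definition conc :: "'a list set \<Rightarrow> 'a list set \<Rightarrow> 'a list set" where
  "conc A B = {u @ v | u v. u \<in> A \<and> v \<in> B}"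

definition kleene :: "'a list set \<Rightarrow> 'a list set" where
  "kleene A = {concat ws | ws. set ws \<subseteq> A}"

fun lang :: "'a rexp \<Rightarrow> 'a list set" where
  "lang Eps = {[]}"
| "lang (Lit a) = {[a]}"
| "lang (Plus r s) = lang r \<union> lang s"
| "lang (Times r s) = conc (lang r) (lang s)"
| "lang (Star r) = kleene (lang r)"

fun rsize :: "'a rexp \<Rightarrow> nat" where
  "rsize Eps = 1"
| "rsize (Lit a) = 1"
| "rsize (Plus r s) = rsize r + rsize s + 1"
| "rsize (Times r s) = rsize r + rsize s + 1"
| "rsize (Star r) = rsize r + 1"

definition rpn :: "'a list set \<Rightarrow> nat" where
  "rpn L = (LEAST m. \<exists>r. lang r = L \<and> rsize r = m)"

definition occ :: "'a list \<Rightarrow> 'a \<Rightarrow> nat" where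
  "occ w a = length (filter (\<lambda>x. x = a) w)"

text \<open>Binary alphabet: letter 1 is True, letter 0 is False.\<close>
definition Bstar :: "nat \<Rightarrow> nat \<Rightarrow> bool list set" where
  "Bstar n k = {w. occ w True \<ge> k \<and> occ w False \<ge> n - k}"

end

theory Submission
  imports Defs
begin

text \<open>Fix an expression \<open>r\<close> of minimal size for \<open>Bstar n k\<close>. Its minimal words, those with
  componentwise least numbers of ones and zeros, are the indicator words of the \<open>k\<close>-subsets
  of \<open>{0..<n}\<close>, and a minimal word of a concatenation splits into minimal words of the
  factors. Hence, for any set \<open>B\<close> of positions, every minimal word follows a heavy path of
  \<open>r\<close>: a descent towards a letter through nested windows, each keeping at least half of the
  points of \<open>B\<close> in its parent. Heavy paths for disjoint sets end in distinct letters, so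
  together there are at most \<open>(rsize r + 1) / 2\<close> of them.

  Singletons \<open>B = {j}\<close> give \<open>rsize r \<ge> 2 * n - 1\<close>. For a block \<open>B\<close> of \<open>2 * k\<close> positions,
  the \<open>k\<close>-subsets of \<open>B\<close> following one heavy path number at most a product of central
  binomial coefficients along the halving chain of window counts, which is at most
  \<open>4 ^ k / sqrt (X ^ m)\<close> when \<open>8 ^ m * X \<le> 2 * k\<close>. As there are at least \<open>4 ^ k / (2 * k)\<close>
  such subsets, \<open>B\<close> needs \<open>sqrt (X ^ m) / (2 * k)\<close> heavy paths. With \<open>X = 8 ^ m\<close> and
  \<open>64 ^ m \<approx> 2 * k\<close>, summing over \<open>n / (2 * k)\<close> disjoint blocks gives
  \<open>rsize r \<ge> n * k ^ \<Omega>(log k)\<close>.\<close>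

section \<open>Central binomial coefficients\<close>

lemma central_binomial_Suc:
  "Suc j * (2 * Suc j choose Suc j) = 2 * (2 * j + 1) * (2 * j choose j)"
  by (metis Suc_eq_plus1 Suc_times_binomial Suc_times_binomial_add
      add_2_eq_Suc add_mult_distrib mult_Suc_right nat_mult_1 one_add_one)

lemma central_binomial_sq_le: "(2 * j choose j) ^ 2 * (3 * j + 1) \<le> 16 ^ j"
proof (induction j)
  case 0
  then show ?case by simp
next
  case (Suc j)
  define X where "X = 2 * j choose j"
  define Y where "Y = 2 * Suc j choose Suc j"
  have step: "Suc j * Y = 2 * (2 * j + 1) * X"
    unfolding X_def Y_def by (rule central_binomial_Suc)
  have IH: "X ^ 2 * (3 * j + 1) \<le> 16 ^ j"
    using Suc.IH by (simp add: X_def)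
  have "(Suc j) ^ 2 * (Y ^ 2 * (3 * Suc j + 1)) = (Suc j * Y) ^ 2 * (3 * j + 4)"
    by (simp add: power2_eq_square algebra_simps)
  also have "\<dots> = (2 * (2 * j + 1) * X) ^ 2 * (3 * j + 4)"
    by (simp only: step)
  also have "\<dots> = 4 * X ^ 2 * ((2 * j + 1) ^ 2 * (3 * j + 4))"
    by (simp add: power2_eq_square algebra_simps)
  also have "\<dots> \<le> 4 * X ^ 2 * (4 * (j + 1) ^ 2 * (3 * j + 1))"
    by (intro mult_le_mono2) (simp add: power2_eq_square algebra_simps)
  also have "\<dots> = 16 * (j + 1) ^ 2 * (X ^ 2 * (3 * j + 1))"
    by (simp add: algebra_simps)
  also have "\<dots> \<le> (Suc j) ^ 2 * 16 ^ Suc j"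
    using IH by simp
  finally show ?case
    unfolding Y_def by (simp del: power_Suc)
qed

definition max_choose :: "nat \<Rightarrow> nat" where
  "max_choose d = d choose (d div 2)"

lemma choose_le_max_choose: "d choose e \<le> max_choose d"
  unfolding max_choose_def by (rule binomial_maximum)

lemma max_choose_le_pow2: "max_choose d \<le> 2 ^ d"
  unfolding max_choose_def by (rule binomial_le_pow2)

lemma max_choose_mult_le: "max_choose a * max_choose b \<le> max_choose (a + b)"
proof -
  let ?i = "a div 2" and ?j = "b div 2"
  have "(a choose ?i) * (b choose (?i + ?j - ?i))
      \<le> (\<Sum>e\<le>?i + ?j. (a choose e) * (b choose (?i + ?j - e)))"
    by (rule member_le_sum) auto
  also have "\<dots> = (a + b) choose (?i + ?j)"
    by (rule vandermonde)
  also have "\<dots> \<le> max_choose (a + b)"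
    by (rule choose_le_max_choose)
  finally show ?thesis
    unfolding max_choose_def by simp
qed

lemma max_choose_sq_le: "max_choose d ^ 2 * d \<le> 4 ^ d"
proof (cases "even d")
  case True
  then obtain j where d: "d = 2 * j" by blast
  have "max_choose d ^ 2 * d \<le> (2 * j choose j) ^ 2 * (3 * j + 1)"
    by (simp add: max_choose_def d)
  also have "\<dots> \<le> 16 ^ j"
    by (rule central_binomial_sq_le)
  finally show ?thesis
    by (simp add: d power_mult)
next
  case False
  then obtain j where d: "d = 2 * j + 1" by (metis oddE)
  have max_odd: "max_choose d \<le> 2 * (2 * j choose j)"
  proof (cases j)
    case 0
    then show ?thesis by (simp add: max_choose_def d)
  next
    case (Suc i)
    have "max_choose d = (2 * j choose j) + (2 * j choose i)"
      by (simp add: max_choose_def d Suc)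
    then show ?thesis
      using binomial_maximum'[of j i] by simp
  qed
  have "max_choose d ^ 2 * d \<le> (2 * (2 * j choose j)) ^ 2 * (3 * j + 1)"
    using max_odd by (intro mult_le_mono power_mono) (auto simp: d)
  also have "\<dots> \<le> 4 * 16 ^ j"
    using central_binomial_sq_le[of j] by (simp add: power_mult_distrib)
  finally show ?thesis
    by (simp add: d power_mult)
qed

lemma max_choose_sq_le_pow4: "max_choose d ^ 2 \<le> 4 ^ d"
proof -
  have "max_choose d ^ 2 \<le> (2 ^ d) ^ 2"
    using max_choose_le_pow2 by (rule power_mono) simp
  then show ?thesis
    by (simp add: power2_eq_square flip: power_mult_distrib)
qed

lemma max_choose_mult_sq_le:
  assumes "W ^ 2 * X ^ m \<le> 4 ^ y" "X \<le> s - y" "y \<le> s"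
  shows "(max_choose (s - y) * W) ^ 2 * X ^ Suc m \<le> 4 ^ s"
proof -
  have "(max_choose (s - y) * W) ^ 2 * X ^ Suc m = (max_choose (s - y) ^ 2 * X) * (W ^ 2 * X ^ m)"
    by (simp add: power2_eq_square algebra_simps)
  also have "\<dots> \<le> 4 ^ (s - y) * 4 ^ y"
    using max_choose_sq_le[of "s - y"] assms(1,2) by (intro mult_le_mono) (meson le_trans mult_le_mono2)
  also have "\<dots> = 4 ^ s"
    using assms(3) by (simp flip: power_add)
  finally show ?thesis .
qed

section \<open>Halving chains\<close>

fun halving_chain :: "nat \<Rightarrow> nat list \<Rightarrow> bool" where
  "halving_chain x [] \<longleftrightarrow> x \<le> 1"
| "halving_chain x (y # ys) \<longleftrightarrow> y \<le> x \<and> x \<le> 2 * y \<and> halving_chain y ys"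

fun chain_weight :: "nat \<Rightarrow> nat list \<Rightarrow> nat" where
  "chain_weight x [] = 1"
| "chain_weight x (y # ys) = max_choose (x - y) * chain_weight y ys"

text \<open>Each time the chain falls below a quarter of the current scale \<open>s\<close>, the factors
  collected since \<open>s\<close> merge by \<open>max_choose_mult_le\<close> into one \<open>max_choose (s - y)\<close>
  with \<open>s - y \<ge> X\<close>, which saves a factor \<open>X\<close> by \<open>max_choose_sq_le\<close>; as the scale
  shrinks at most eightfold each time, \<open>8 ^ m * X \<le> s\<close> leaves room for \<open>m\<close> savings.\<close>

lemma chain_weight_sq_le:
  assumes "halving_chain x ys" "x \<le> s" "8 \<le> X"
    and "0 < m \<Longrightarrow> 8 ^ m * X \<le> s \<and> s < 4 * x"
  shows "(max_choose (s - x) * chain_weight x ys) ^ 2 * X ^ m \<le> 4 ^ s"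
  using assms
proof (induction ys arbitrary: x m s)
  case Nil
  have "m = 0"
  proof (rule ccontr)
    assume "m \<noteq> 0"
    then have "8 ^ m * X \<le> s" "s < 4 * x" "x \<le> 1"
      using Nil by auto
    moreover have "X \<le> 8 ^ m * X"
      by simp
    ultimately show False
      using \<open>8 \<le> X\<close> by linarith
  qed
  have "max_choose (s - x) ^ 2 \<le> 4 ^ s"
    using max_choose_sq_le_pow4[of "s - x"] power_increasing[of "s - x" s "4::nat"]
    by (meson diff_le_self le_trans one_le_numeral)
  then show ?case
    using \<open>m = 0\<close> by simp
next
  case (Cons y ys)
  then have y: "y \<le> x" "x \<le> 2 * y" and chain: "halving_chain y ys"
    by auto
  have "(max_choose (s - x) * chain_weight x (y # ys)) ^ 2 * X ^ m
      \<le> (max_choose (s - y) * chain_weight y ys) ^ 2 * X ^ m"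
    using max_choose_mult_le[of "s - x" "x - y"] y \<open>x \<le> s\<close>
    by (intro mult_le_mono1 power_mono) (auto simp: mult.assoc)
  also have "\<dots> \<le> 4 ^ s"
  proof (cases "m = 0 \<or> s < 4 * y")
    case True
    then show ?thesis
      using Cons.IH[OF chain _ \<open>8 \<le> X\<close>, of s m] Cons.prems(4) y \<open>x \<le> s\<close> by auto
  next
    case False
    then obtain m' where m: "m = Suc m'"
      by (cases m) auto
    have "8 * (8 ^ m' * X) \<le> s" "s < 4 * x"
      using Cons.prems(4) m by auto
    moreover have "X \<le> 8 ^ m' * X"
      by simp
    ultimately have "8 ^ m' * X \<le> y" "X \<le> s - y" "0 < y"
      using False y \<open>8 \<le> X\<close> by linarith+
    then have "(chain_weight y ys) ^ 2 * X ^ m' \<le> 4 ^ y"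
      using Cons.IH[OF chain _ \<open>8 \<le> X\<close>, of y m'] by (auto simp: max_choose_def)
    then show ?thesis
      using max_choose_mult_sq_le \<open>X \<le> s - y\<close> y \<open>x \<le> s\<close> m by simp
  qed
  finally show ?case .
qed

section \<open>Minimal words\<close>

lemma occ_Nil [simp]: "occ [] a = 0"
  by (simp add: occ_def)

lemma occ_Cons [simp]: "occ (x # xs) a = (if x = a then Suc (occ xs a) else occ xs a)"
  by (simp add: occ_def)

lemma occ_append [simp]: "occ (u @ v) a = occ u a + occ v a"
  by (simp add: occ_def)

lemma length_eq_occ_True_False: "length (w :: bool list) = occ w True + occ w False"
  by (induction w) auto

definition minimal_word :: "bool list set \<Rightarrow> bool list \<Rightarrow> bool" where
  "minimal_word L w \<longleftrightarrow> w \<in> L \<and> (\<forall>v\<in>L. occ w True \<le> occ v True \<and> occ w False \<le> occ v False)"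

lemma minimal_word_conc:
  assumes "minimal_word (conc A B) w"
  obtains u v where "w = u @ v" "minimal_word A u" "minimal_word B v"
proof -
  from assms obtain u v where w: "w = u @ v" and u: "u \<in> A" and v: "v \<in> B"
    by (auto simp: minimal_word_def conc_def)
  have "u' @ v \<in> conc A B" if "u' \<in> A" for u'
    using that v by (auto simp: conc_def)
  then have "minimal_word A u"
    using assms u w unfolding minimal_word_def by fastforce
  moreover have "u @ v' \<in> conc A B" if "v' \<in> B" for v'
    using that u by (auto simp: conc_def)
  then have "minimal_word B v"
    using assms v w unfolding minimal_word_def by fastforce
  ultimately show thesis
    using w that by blast
qed

lemma minimal_word_kleene: "minimal_word (kleene A) w \<Longrightarrow> w = []"
proof -
  assume min: "minimal_word (kleene A) w"
  have "[] \<in> kleene A"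
    unfolding kleene_def by (auto intro: exI[of _ "[]"])
  then have "occ w True = 0" "occ w False = 0"
    using min unfolding minimal_word_def by fastforce+
  then show ?thesis
    using length_eq_occ_True_False[of w] by simp
qed

lemma minimal_word_Un: "minimal_word (A \<union> B) w \<Longrightarrow> minimal_word A w \<or> minimal_word B w"
  unfolding minimal_word_def by auto

lemma minimal_word_occ_eq:
  assumes "minimal_word L u" "minimal_word L v"
  shows "occ u a = occ v a"
proof -
  have "occ u True = occ v True \<and> occ u False = occ v False"
    using assms unfolding minimal_word_def by (meson le_antisym)
  then show ?thesis
    by (cases a) auto
qed

text \<open>Not every language has a minimal word (take \<open>{[True], [False]}\<close>), so \<open>min_word r\<close>
  is meaningful only when \<open>lang r\<close> has one; below it is only used along minimal words.\<close>

definition min_word :: "bool rexp \<Rightarrow> bool list" where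
  "min_word r = (SOME w. minimal_word (lang r) w)"

lemma min_word_length_ones:
  assumes "minimal_word (lang r) w"
  shows "length (min_word r) = length w" "occ (min_word r) True = occ w True"
proof -
  have min: "minimal_word (lang r) (min_word r)"
    unfolding min_word_def using assms by (rule someI)
  show "occ (min_word r) True = occ w True"
    using minimal_word_occ_eq[OF min assms] .
  then show "length (min_word r) = length w"
    using minimal_word_occ_eq[OF min assms, of False] length_eq_occ_True_False by metis
qed

section \<open>Heavy paths\<close>

type_synonym segment = "nat \<times> nat \<times> nat"

definition count_in :: "nat set \<Rightarrow> nat \<Rightarrow> nat \<Rightarrow> nat" where
  "count_in B a l = card (B \<inter> {a..<a + l})"

definition shift_down :: "nat \<Rightarrow> nat set \<Rightarrow> nat set" where
  "shift_down d B = (\<lambda>i. i - d) ` (B \<inter> {d..})"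

definition shift_segments :: "nat \<Rightarrow> segment list \<Rightarrow> segment list" where
  "shift_segments d \<tau> = map (\<lambda>(a, l, c). (a + d, l, c)) \<tau>"

text \<open>A segment \<open>(a, l, c)\<close> is the window \<open>{a..<a + l}\<close> of a word carrying \<open>c\<close> ones.
  A heavy path of \<open>r\<close> with respect to a set \<open>B\<close> of positions lists the segments occupied,
  inside a minimal word of \<open>r\<close>, by the subexpressions met when descending from \<open>r\<close> to a
  letter, entering at each concatenation the factor whose window holds more points of \<open>B\<close>.
  Such a path is fixed by the choices made at unions, so there are at most as many of them
  as letters in \<open>r\<close>.\<close>

fun heavy_paths :: "bool rexp \<Rightarrow> nat set \<Rightarrow> segment list set" where
  "heavy_paths Eps B = {}"
| "heavy_paths (Lit a) B = (if 0 \<in> B then {[]} else {})"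
| "heavy_paths (Plus r s) B = heavy_paths r B \<union> heavy_paths s B"
| "heavy_paths (Times r s) B =
    (if count_in B (length (min_word r)) (length (min_word s)) \<le> count_in B 0 (length (min_word r))
     then (\<lambda>\<tau>. (0, length (min_word r), occ (min_word r) True) # \<tau>) ` heavy_paths r B
     else (\<lambda>\<tau>. (length (min_word r), length (min_word s), occ (min_word s) True)
                # shift_segments (length (min_word r)) \<tau>)
          ` heavy_paths s (shift_down (length (min_word r)) B))"
| "heavy_paths (Star r) B = {}"

fun halving_path :: "nat set \<Rightarrow> nat \<Rightarrow> nat \<Rightarrow> segment list \<Rightarrow> bool" where
  "halving_path B a0 l0 [] \<longleftrightarrow> count_in B a0 l0 \<le> 1"
| "halving_path B a0 l0 ((a, l, c) # \<tau>) \<longleftrightarrow>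
     a0 \<le> a \<and> a + l \<le> a0 + l0 \<and> count_in B a0 l0 \<le> 2 * count_in B a l \<and> halving_path B a l \<tau>"

fun matches :: "bool list \<Rightarrow> segment list \<Rightarrow> bool" where
  "matches w [] \<longleftrightarrow> True"
| "matches w ((a, l, c) # \<tau>) \<longleftrightarrow> a + l \<le> length w \<and> occ (take l (drop a w)) True = c \<and> matches w \<tau>"

lemma finite_heavy_paths: "finite (heavy_paths r B)"
  by (induction r arbitrary: B) auto

lemma shift_down_disjoint: "A \<inter> B = {} \<Longrightarrow> shift_down d A \<inter> shift_down d B = {}"
  unfolding shift_down_def by auto (metis diff_add_inverse2 le_add_diff_inverse2 disjoint_iff)

lemma count_in_shift_down: "count_in (shift_down d B) a l = count_in B (a + d) l"
proof -
  have "shift_down d B \<inter> {a..<a + l} = (\<lambda>i. i - d) ` (B \<inter> {a + d..<a + d + l})"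
  proof (intro equalityI subsetI)
    fix x
    assume "x \<in> shift_down d B \<inter> {a..<a + l}"
    then obtain i where "i \<in> B" "d \<le> i" "x = i - d" "a \<le> x" "x < a + l"
      by (auto simp: shift_down_def)
    then show "x \<in> (\<lambda>i. i - d) ` (B \<inter> {a + d..<a + d + l})"
      by force
  next
    fix x
    assume "x \<in> (\<lambda>i. i - d) ` (B \<inter> {a + d..<a + d + l})"
    then show "x \<in> shift_down d B \<inter> {a..<a + l}"
      by (auto simp: shift_down_def)
  qed
  moreover have "inj_on (\<lambda>i. i - d) (B \<inter> {a + d..<a + d + l})"
    by (auto simp: inj_on_def)
  ultimately show ?thesis
    unfolding count_in_def by (simp add: card_image)
qed

lemma count_in_split: "count_in B a (l + m) = count_in B a l + count_in B (a + l) m"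
proof -
  have "B \<inter> {a..<a + (l + m)} = (B \<inter> {a..<a + l}) \<union> (B \<inter> {a + l..<a + l + m})"
    by auto
  then show ?thesis
    unfolding count_in_def by (simp add: card_Un_disjoint disjoint_iff)
qed

lemma count_in_mono: "a0 \<le> a \<Longrightarrow> a + l \<le> a0 + l0 \<Longrightarrow> count_in B a l \<le> count_in B a0 l0"
  unfolding count_in_def by (intro card_mono) auto

lemma halving_path_shift_segments:
  "halving_path (shift_down d B) a l \<tau> \<Longrightarrow> halving_path B (a + d) l (shift_segments d \<tau>)"
  by (induction "shift_down d B" a l \<tau> rule: halving_path.induct)
    (auto simp: shift_segments_def count_in_shift_down)

lemma matches_append_right: "matches u \<tau> \<Longrightarrow> matches (u @ v) \<tau>"
  by (induction u \<tau> rule: matches.induct) auto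

lemma matches_shift_segments: "matches v \<tau> \<Longrightarrow> matches (u @ v) (shift_segments (length u) \<tau>)"
  by (induction v \<tau> rule: matches.induct) (auto simp: shift_segments_def add.commute)

lemma shift_down_empty [simp]: "shift_down d {} = {}"
  by (simp add: shift_down_def)

lemma heavy_paths_empty [simp]: "heavy_paths r {} = {}"
  by (induction r) auto

lemma heavy_paths_card_sum:
  assumes "finite I" "\<And>i j. i \<in> I \<Longrightarrow> j \<in> I \<Longrightarrow> i \<noteq> j \<Longrightarrow> B i \<inter> B j = {}"
  shows "2 * (\<Sum>i\<in>I. card (heavy_paths r (B i))) \<le> rsize r + 1"
  using assms(2)
proof (induction r arbitrary: B)
  case (Lit a)
  have "(\<Sum>i\<in>I. card (heavy_paths (Lit a) (B i))) = (\<Sum>i\<in>I. if 0 \<in> B i then 1 else 0)"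
    by (intro sum.cong) auto
  also have "\<dots> = card {i\<in>I. 0 \<in> B i}"
    using assms(1) sum.inter_filter[of I "\<lambda>_. 1::nat" "\<lambda>i. 0 \<in> B i"] by simp
  also have "\<dots> \<le> 1"
  proof -
    have "\<forall>i\<in>{i\<in>I. 0 \<in> B i}. \<forall>j\<in>{i\<in>I. 0 \<in> B i}. i = j"
      using Lit.prems by blast
    then show ?thesis
      using card_le_Suc0_iff_eq[of "{i\<in>I. 0 \<in> B i}"] assms(1) by simp
  qed
  finally show ?case by simp
next
  case (Plus r s)
  have "(\<Sum>i\<in>I. card (heavy_paths (Plus r s) (B i)))
      \<le> (\<Sum>i\<in>I. card (heavy_paths r (B i))) + (\<Sum>i\<in>I. card (heavy_paths s (B i)))"
    by (simp add: card_Un_le sum_mono flip: sum.distrib)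
  then show ?case
    using Plus.IH(1)[of B, OF Plus.prems] Plus.IH(2)[of B, OF Plus.prems] by simp
next
  case (Times r s)
  define left where "left i \<longleftrightarrow> count_in (B i) (length (min_word r)) (length (min_word s))
                                 \<le> count_in (B i) 0 (length (min_word r))" for i
  define Br where "Br i = (if left i then B i else {})" for i
  define Bs where "Bs i = (if left i then {} else shift_down (length (min_word r)) (B i))" for i
  have "card (heavy_paths (Times r s) (B i)) \<le> card (heavy_paths r (Br i)) + card (heavy_paths s (Bs i))"
    for i
    using card_image_le[OF finite_heavy_paths]
    by (cases "left i") (auto simp: left_def Br_def Bs_def simp del: heavy_paths.simps(1-3,5))
  then have "(\<Sum>i\<in>I. card (heavy_paths (Times r s) (B i)))
      \<le> (\<Sum>i\<in>I. card (heavy_paths r (Br i))) + (\<Sum>i\<in>I. card (heavy_paths s (Bs i)))"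
    by (simp add: sum_mono flip: sum.distrib)
  moreover have "Br i \<inter> Br j = {}" "Bs i \<inter> Bs j = {}" if "i \<in> I" "j \<in> I" "i \<noteq> j" for i j
    using Times.prems[OF that] shift_down_disjoint by (auto simp: Br_def Bs_def)
  ultimately show ?case
    using Times.IH(1)[of Br] Times.IH(2)[of Bs] by fastforce
qed simp_all

definition follows_heavy_path :: "bool rexp \<Rightarrow> nat set \<Rightarrow> bool list \<Rightarrow> bool" where
  "follows_heavy_path r B w \<longleftrightarrow> (\<exists>\<tau>\<in>heavy_paths r B. matches w \<tau> \<and> halving_path B 0 (length w) \<tau>)"

lemma follows_heavy_path_Times:
  assumes IH_r: "\<And>u B. minimal_word (lang r) u \<Longrightarrow> 0 < count_in B 0 (length u) \<Longrightarrow> follows_heavy_path r B u"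
    and IH_s: "\<And>v B. minimal_word (lang s) v \<Longrightarrow> 0 < count_in B 0 (length v) \<Longrightarrow> follows_heavy_path s B v"
    and "minimal_word (lang (Times r s)) w" "0 < count_in B 0 (length w)"
  shows "follows_heavy_path (Times r s) B w"
proof -
  obtain u v where w: "w = u @ v" and u: "minimal_word (lang r) u" and v: "minimal_word (lang s) v"
    using minimal_word_conc assms(3) by (metis lang.simps(4))
  note min_r = min_word_length_ones[OF u] and min_s = min_word_length_ones[OF v]
  have split: "count_in B 0 (length w) = count_in B 0 (length u) + count_in B (length u) (length v)"
    using w count_in_split[of B 0 "length u" "length v"] by simp
  show ?thesis
  proof (cases "count_in B (length u) (length v) \<le> count_in B 0 (length u)")
    case True
    then have "0 < count_in B 0 (length u)"
      using assms(4) split by linarith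
    then obtain \<tau> where \<tau>: "\<tau> \<in> heavy_paths r B" "matches u \<tau>" "halving_path B 0 (length u) \<tau>"
      using IH_r[OF u] unfolding follows_heavy_path_def by blast
    let ?\<sigma> = "(0, length u, occ u True) # \<tau>"
    have "?\<sigma> \<in> heavy_paths (Times r s) B"
      using True \<tau>(1) min_r min_s by simp
    moreover have "matches w ?\<sigma> \<and> halving_path B 0 (length w) ?\<sigma>"
      using \<tau>(2,3) True split w by (simp add: matches_append_right)
    ultimately show ?thesis
      unfolding follows_heavy_path_def by blast
  next
    case False
    have "0 < count_in (shift_down (length u) B) 0 (length v)"
      using False by (simp add: count_in_shift_down)
    then obtain \<tau> where \<tau>: "\<tau> \<in> heavy_paths s (shift_down (length u) B)" "matches v \<tau>"
        "halving_path (shift_down (length u) B) 0 (length v) \<tau>"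
      using IH_s[OF v] unfolding follows_heavy_path_def by blast
    let ?\<sigma> = "(length u, length v, occ v True) # shift_segments (length u) \<tau>"
    have "?\<sigma> \<in> heavy_paths (Times r s) B"
      using False \<tau>(1) min_r min_s by simp
    moreover have "matches w ?\<sigma> \<and> halving_path B 0 (length w) ?\<sigma>"
      using matches_shift_segments[OF \<tau>(2)] halving_path_shift_segments[OF \<tau>(3)] False split w
      by simp
    ultimately show ?thesis
      unfolding follows_heavy_path_def by blast
  qed
qed

lemma follows_heavy_path_if_minimal_word:
  "minimal_word (lang r) w \<Longrightarrow> 0 < count_in B 0 (length w) \<Longrightarrow> follows_heavy_path r B w"
proof (induction r arbitrary: w B)
  case (Lit a)
  then have "w = [a]"
    by (simp add: minimal_word_def)
  moreover have "card (B \<inter> {0..<1}) \<le> card {0::nat}"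
    by (intro card_mono) auto
  ultimately show ?case
    using Lit.prems(2) by (auto simp: follows_heavy_path_def count_in_def card_gt_0_iff)
next
  case (Plus r s)
  from minimal_word_Un[of "lang r" "lang s" w] Plus.prems(1)
  consider "minimal_word (lang r) w" | "minimal_word (lang s) w"
    by auto
  then show ?case
    using Plus.IH(1)[of w B] Plus.IH(2)[of w B] Plus.prems(2) by cases (auto simp: follows_heavy_path_def)
next
  case (Times r s)
  then show ?case
    by (rule follows_heavy_path_Times)
qed (use minimal_word_kleene in \<open>auto simp: minimal_word_def count_in_def\<close>)

definition path_subsets :: "nat set \<Rightarrow> nat \<Rightarrow> nat \<Rightarrow> nat \<Rightarrow> segment list \<Rightarrow> nat set set" where
  "path_subsets B a l k \<tau> =
     {S. S \<subseteq> B \<inter> {a..<a + l} \<and> card S = k \<and> (\<forall>(a', l', c)\<in>set \<tau>. card (S \<inter> {a'..<a' + l'}) = c)}"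

definition path_counts :: "nat set \<Rightarrow> segment list \<Rightarrow> nat list" where
  "path_counts B \<tau> = map (\<lambda>(a, l, c). count_in B a l) \<tau>"

lemma halving_path_nested:
  "halving_path B a0 l0 \<tau> \<Longrightarrow> (a, l, c) \<in> set \<tau> \<Longrightarrow> a0 \<le> a \<and> a + l \<le> a0 + l0"
  by (induction B a0 l0 \<tau> rule: halving_path.induct) fastforce+

lemma halving_path_halving_chain:
  "halving_path B a l \<tau> \<Longrightarrow> halving_chain (count_in B a l) (path_counts B \<tau>)"
  by (induction B a l \<tau> rule: halving_path.induct) (auto simp: path_counts_def count_in_mono)

lemma finite_path_subsets: "finite (path_subsets B a l k \<tau>)"
  unfolding path_subsets_def by (rule finite_subset[of _ "Pow {a..<a + l}"]) auto

lemma path_subsets_Cons_split: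
  assumes "halving_path B a0 l0 ((a, l, c) # \<tau>)" "S \<in> path_subsets B a0 l0 k ((a, l, c) # \<tau>)"
  shows "S - {a..<a + l} \<subseteq> B \<inter> {a0..<a0 + l0} - B \<inter> {a..<a + l}"
    and "card (S - {a..<a + l}) = k - c"
    and "S \<inter> {a..<a + l} \<in> path_subsets B a l c \<tau>"
proof -
  have S: "S \<subseteq> B \<inter> {a0..<a0 + l0}" "card S = k" "card (S \<inter> {a..<a + l}) = c"
    and S_\<tau>: "\<forall>(a', l', c')\<in>set \<tau>. card (S \<inter> {a'..<a' + l'}) = c'"
    using assms(2) by (auto simp: path_subsets_def)
  show "S - {a..<a + l} \<subseteq> B \<inter> {a0..<a0 + l0} - B \<inter> {a..<a + l}"
    using S(1) by auto
  have "finite S"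
    using S(1) finite_subset by blast
  then show "card (S - {a..<a + l}) = k - c"
    using S(2,3) by (metis Diff_Int2 card_Diff_subset_Int finite_Int inf_le1 card_Diff_subset)
  have nested: "a \<le> a' \<and> a' + l' \<le> a + l" if "(a', l', c') \<in> set \<tau>" for a' l' c'
    using assms(1) that halving_path_nested[of B a l \<tau>] by auto
  have "S \<inter> {a..<a + l} \<inter> {a'..<a' + l'} = S \<inter> {a'..<a' + l'}" if "(a', l', c') \<in> set \<tau>" for a' l' c'
    using nested[OF that] by auto
  then show "S \<inter> {a..<a + l} \<in> path_subsets B a l c \<tau>"
    using S S_\<tau> by (fastforce simp: path_subsets_def)
qed

lemma card_path_subsets_Nil_le: "count_in B a l \<le> 1 \<Longrightarrow> card (path_subsets B a l k []) \<le> 1"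
proof -
  assume "count_in B a l \<le> 1"
  let ?J = "B \<inter> {a..<a + l}"
  have "card (path_subsets B a l k []) \<le> card {S. S \<subseteq> ?J \<and> card S = k}"
    by (intro card_mono) (auto simp: path_subsets_def)
  also have "\<dots> = card ?J choose k"
    by (intro n_subsets) auto
  also have "\<dots> \<le> 1"
    using \<open>count_in B a l \<le> 1\<close> by (cases k; cases "k - 1") (auto simp: count_in_def le_Suc_eq)
  finally show ?thesis .
qed

lemma card_path_subsets_le:
  "halving_path B a l \<tau> \<Longrightarrow> card (path_subsets B a l k \<tau>) \<le> chain_weight (count_in B a l) (path_counts B \<tau>)"
proof (induction \<tau> arbitrary: a l k)
  case Nil
  then show ?case
    using card_path_subsets_Nil_le by (simp add: path_counts_def)
next
  case (Cons \<sigma> \<tau>)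
  obtain a' l' c where \<sigma>: "\<sigma> = (a', l', c)"
    by (cases \<sigma>)
  let ?J = "B \<inter> {a..<a + l}" and ?W = "B \<inter> {a'..<a' + l'}"
  have path: "halving_path B a' l' \<tau>" "a \<le> a'" "a' + l' \<le> a + l"
    using Cons.prems \<sigma> by auto
  let ?split = "\<lambda>S. (S - {a'..<a' + l'}, S \<inter> {a'..<a' + l'})"
  have "inj_on ?split (path_subsets B a l k (\<sigma> # \<tau>))"
    by (rule inj_onI) (metis Int_Diff_Un prod.inject)
  moreover have "?split ` path_subsets B a l k (\<sigma> # \<tau>)
      \<subseteq> {X. X \<subseteq> ?J - ?W \<and> card X = k - c} \<times> path_subsets B a' l' c \<tau>"
    using path_subsets_Cons_split[OF Cons.prems[unfolded \<sigma>]] \<sigma> by blast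
  ultimately have "card (path_subsets B a l k (\<sigma> # \<tau>))
      \<le> card ({X. X \<subseteq> ?J - ?W \<and> card X = k - c} \<times> path_subsets B a' l' c \<tau>)"
    by (rule card_inj_on_le) (simp add: finite_path_subsets)
  also have "\<dots> = (card (?J - ?W) choose (k - c)) * card (path_subsets B a' l' c \<tau>)"
    by (simp add: n_subsets card_cartesian_product)
  also have "\<dots> \<le> max_choose (count_in B a l - count_in B a' l') * chain_weight (count_in B a' l') (path_counts B \<tau>)"
  proof (intro mult_le_mono)
    have "card (?J - ?W) = count_in B a l - count_in B a' l'"
      using path by (auto simp: count_in_def intro!: card_Diff_subset)
    then show "card (?J - ?W) choose (k - c) \<le> max_choose (count_in B a l - count_in B a' l')"
      using choose_le_max_choose by simp
    show "card (path_subsets B a' l' c \<tau>) \<le> chain_weight (count_in B a' l') (path_counts B \<tau>)"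
      using Cons.IH[OF path(1)] .
  qed
  also have "\<dots> = chain_weight (count_in B a l) (path_counts B (\<sigma> # \<tau>))"
    by (simp add: \<sigma> path_counts_def)
  finally show ?case .
qed

definition indicator_word :: "nat \<Rightarrow> nat set \<Rightarrow> bool list" where
  "indicator_word n S = map (\<lambda>i. i \<in> S) [0..<n]"

lemma occ_map_upt: "occ (map (\<lambda>i. i \<in> S) [a..<b]) True = card (S \<inter> {a..<b})"
proof -
  have "occ (map (\<lambda>i. i \<in> S) [a..<b]) True = length (filter (\<lambda>i. i \<in> S) [a..<b])"
    by (simp add: occ_def filter_map o_def)
  also have "\<dots> = card (S \<inter> {a..<b})"
    by (metis distinct_card distinct_filter distinct_upt set_filter set_upt inf_commute
        Collect_conj_eq Collect_mem_eq)
  finally show ?thesis .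
qed

lemma matches_indicator_word:
  "matches (indicator_word n S) \<tau> \<Longrightarrow> (a, l, c) \<in> set \<tau> \<Longrightarrow> card (S \<inter> {a..<a + l}) = c"
proof (induction \<tau>)
  case (Cons \<sigma> \<tau>)
  obtain a' l' c' where \<sigma>: "\<sigma> = (a', l', c')"
    by (cases \<sigma>)
  then have "a' + l' \<le> n"
    using Cons.prems(1) by (simp add: indicator_word_def)
  then have "take l' (drop a' (indicator_word n S)) = map (\<lambda>i. i \<in> S) [a'..<a' + l']"
    by (simp add: indicator_word_def drop_map take_map)
  then show ?case
    using Cons \<sigma> occ_map_upt[of S a' "a' + l'"] by auto
qed simp

lemma minimal_word_indicator_word:
  assumes "S \<subseteq> {0..<n}" "card S = k"
  shows "minimal_word (Bstar n k) (indicator_word n S)"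
proof -
  have ones: "occ (indicator_word n S) True = k"
    using occ_map_upt[of S 0 n] assms by (simp add: indicator_word_def Int_absorb2)
  then have "occ (indicator_word n S) False = n - k"
    using length_eq_occ_True_False[of "indicator_word n S"] by (simp add: indicator_word_def)
  then show ?thesis
    using ones by (auto simp: minimal_word_def Bstar_def)
qed

lemma k_subsets_covered_by_heavy_paths:
  assumes "lang r = Bstar n k" "B \<subseteq> {0..<n}" "card B = 2 * k" "1 \<le> k"
  shows "{S. S \<subseteq> B \<and> card S = k}
    \<subseteq> (\<Union>\<tau>\<in>{\<tau>\<in>heavy_paths r B. halving_path B 0 n \<tau>}. path_subsets B 0 n k \<tau>)"
proof
  fix S
  assume "S \<in> {S. S \<subseteq> B \<and> card S = k}"
  then have S: "S \<subseteq> B" "card S = k" by auto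
  have "minimal_word (lang r) (indicator_word n S)"
    using minimal_word_indicator_word[of S n k] S assms(1,2) by auto
  moreover have "0 < count_in B 0 (length (indicator_word n S))"
    using assms(2-4) by (simp add: indicator_word_def count_in_def Int_absorb2)
  ultimately obtain \<tau> where "\<tau> \<in> heavy_paths r B" "matches (indicator_word n S) \<tau>" "halving_path B 0 n \<tau>"
    using follows_heavy_path_if_minimal_word[of r "indicator_word n S" B]
    by (auto simp: follows_heavy_path_def indicator_word_def)
  moreover have "S \<in> path_subsets B 0 n k \<tau>"
    using S assms(2) matches_indicator_word[OF \<open>matches _ \<tau>\<close>] by (auto simp: path_subsets_def)
  ultimately show "S \<in> (\<Union>\<tau>\<in>{\<tau>\<in>heavy_paths r B. halving_path B 0 n \<tau>}. path_subsets B 0 n k \<tau>)"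
    by blast
qed

lemma card_path_subsets_mult_sqrt_le:
  fixes X m :: nat
  assumes "halving_path B 0 n \<tau>" "count_in B 0 n = 2 * k" "8 \<le> X" "8 ^ m * X \<le> 2 * k"
  shows "card (path_subsets B 0 n k \<tau>) * sqrt (X ^ m) \<le> 4 ^ k"
proof -
  have "X \<le> 8 ^ m * X"
    by simp
  then have "0 < k"
    using assms(3,4) by linarith
  have "halving_chain (2 * k) (path_counts B \<tau>)"
    using halving_path_halving_chain[OF assms(1)] assms(2) by simp
  then have "chain_weight (2 * k) (path_counts B \<tau>) ^ 2 * X ^ m \<le> 4 ^ (2 * k)"
    using chain_weight_sq_le[of "2 * k" _ "2 * k" X m] assms(3,4) \<open>0 < k\<close>
    by (simp add: max_choose_def)
  moreover have "card (path_subsets B 0 n k \<tau>) \<le> chain_weight (2 * k) (path_counts B \<tau>)"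
    using card_path_subsets_le[OF assms(1)] assms(2) by simp
  ultimately have "card (path_subsets B 0 n k \<tau>) ^ 2 * X ^ m \<le> 16 ^ k"
    by (simp add: power_mult) (meson le_trans mult_le_mono1 power_mono zero_le)
  then have "real (card (path_subsets B 0 n k \<tau>) ^ 2 * X ^ m) \<le> real (16 ^ k)"
    by (simp only: of_nat_le_iff)
  then have "sqrt (real (card (path_subsets B 0 n k \<tau>) ^ 2 * X ^ m)) \<le> sqrt (real (16 ^ k))"
    by (rule real_sqrt_le_mono)
  then show ?thesis
    by (simp add: real_sqrt_mult real_sqrt_power)
qed

lemma central_choose_mult_sqrt_le:
  fixes X m :: nat
  assumes "lang r = Bstar n k" "B \<subseteq> {0..<n}" "card B = 2 * k" "1 \<le> k"
    and "8 \<le> X" "8 ^ m * X \<le> 2 * k"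
  shows "(2 * k choose k) * sqrt (X ^ m) \<le> card (heavy_paths r B) * 4 ^ k"
proof -
  define P where "P = {\<tau>\<in>heavy_paths r B. halving_path B 0 n \<tau>}"
  have "finite P"
    unfolding P_def using finite_heavy_paths by simp
  have "finite B"
    using assms(2) finite_subset by blast
  then have "2 * k choose k = card {S. S \<subseteq> B \<and> card S = k}"
    using assms(3) by (simp add: n_subsets)
  also have "\<dots> \<le> card (\<Union>\<tau>\<in>P. path_subsets B 0 n k \<tau>)"
    using k_subsets_covered_by_heavy_paths[OF assms(1-4)] \<open>finite P\<close>
    unfolding P_def by (intro card_mono) (auto simp: finite_path_subsets)
  also have "\<dots> \<le> (\<Sum>\<tau>\<in>P. card (path_subsets B 0 n k \<tau>))"
    by (rule card_UN_le[OF \<open>finite P\<close>])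
  finally have "(2 * k choose k) * sqrt (X ^ m) \<le> (\<Sum>\<tau>\<in>P. card (path_subsets B 0 n k \<tau>) * sqrt (X ^ m))"
    unfolding sum_distrib_right[symmetric] of_nat_le_iff[symmetric, where 'a=real]
    by (intro mult_right_mono) auto
  also have "\<dots> \<le> card P * 4 ^ k"
  proof -
    have "count_in B 0 n = 2 * k"
      using assms(2,3) by (simp add: count_in_def Int_absorb2)
    then have "card (path_subsets B 0 n k \<tau>) * sqrt (X ^ m) \<le> 4 ^ k" if "\<tau> \<in> P" for \<tau>
      using card_path_subsets_mult_sqrt_le that assms(5,6) by (simp add: P_def)
    then show ?thesis
      using sum_mono[of P "\<lambda>\<tau>. card (path_subsets B 0 n k \<tau>) * sqrt (X ^ m)" "\<lambda>_. 4 ^ k :: real"]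
      by simp
  qed
  also have "\<dots> \<le> card (heavy_paths r B) * 4 ^ k"
    unfolding P_def of_nat_le_iff by (intro mult_le_mono1 card_mono finite_heavy_paths) auto
  finally show ?thesis
    by simp
qed

lemma sqrt_le_card_heavy_paths:
  fixes X m :: nat
  assumes "lang r = Bstar n k" "B \<subseteq> {0..<n}" "card B = 2 * k" "1 \<le> k"
    and "8 \<le> X" "8 ^ m * X \<le> 2 * k"
  shows "sqrt (X ^ m) \<le> 2 * k * card (heavy_paths r B)"
proof -
  have "4 ^ k \<le> 2 * real k * (2 * k choose k)"
    using central_binomial_lower_bound[of k] assms(4) by (simp add: field_simps)
  then have "4 ^ k * sqrt (X ^ m) \<le> 2 * real k * ((2 * k choose k) * sqrt (X ^ m))"
    by (metis mult.assoc mult_right_mono real_sqrt_ge_zero of_nat_0_le_iff)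
  also have "\<dots> \<le> 2 * real k * (card (heavy_paths r B) * 4 ^ k)"
    using central_choose_mult_sqrt_le[OF assms] by (intro mult_left_mono) auto
  finally show ?thesis
    by (simp add: mult.commute mult.left_commute)
qed

lemma rsize_ge_twice_length:
  assumes "lang r = Bstar n k" "k \<le> n"
  shows "2 * n \<le> rsize r + 1"
proof -
  have min: "minimal_word (lang r) (indicator_word n {0..<k})"
    using minimal_word_indicator_word[of "{0..<k}" n k] assms by auto
  have "1 \<le> card (heavy_paths r {j})" if "j < n" for j
  proof -
    have "0 < count_in {j} 0 (length (indicator_word n {0..<k}))"
      using that by (simp add: indicator_word_def count_in_def)
    then have "heavy_paths r {j} \<noteq> {}"
      using follows_heavy_path_if_minimal_word[OF min] by (auto simp: follows_heavy_path_def)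
    then show ?thesis
      using finite_heavy_paths[of r "{j}"] by (simp add: Suc_le_eq card_gt_0_iff)
  qed
  then have "(\<Sum>j<n. 1) \<le> (\<Sum>j<n. card (heavy_paths r {j}))"
    by (intro sum_mono) simp
  then have "n \<le> (\<Sum>j<n. card (heavy_paths r {j}))"
    by simp
  moreover have "2 * (\<Sum>j<n. card (heavy_paths r {j})) \<le> rsize r + 1"
    by (rule heavy_paths_card_sum) auto
  ultimately show ?thesis
    by linarith
qed

lemma rsize_ge_blocks:
  fixes X m :: nat
  assumes "lang r = Bstar n k" "1 \<le> k" "8 \<le> X" "8 ^ m * X \<le> 2 * k"
  shows "real (n div (2 * k)) * sqrt (X ^ m) \<le> real k * real (rsize r + 1)"
proof -
  define q where "q = n div (2 * k)"
  define B where "B j = {2 * k * j..<2 * k * j + 2 * k}" for j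
  have disjoint: "B i \<inter> B j = {}" if "i \<noteq> j" for i j
  proof -
    have "x div (2 * k) = i" "x div (2 * k) = j" if "x \<in> B i" "x \<in> B j" for x
      using that by (auto simp: B_def intro: div_nat_eqI)
    then show ?thesis
      using \<open>i \<noteq> j\<close> by blast
  qed
  have block: "sqrt (X ^ m) \<le> 2 * k * card (heavy_paths r (B j))" if "j < q" for j
  proof (rule sqrt_le_card_heavy_paths[OF assms(1) _ _ assms(2-4)])
    have "2 * k * j + 2 * k \<le> 2 * k * q"
      using that by (metis Suc_leI add.commute mult_Suc_right mult_le_mono2)
    also have "\<dots> \<le> n"
      unfolding q_def by (metis div_times_less_eq_dividend mult.commute)
    finally show "B j \<subseteq> {0..<n}"
      by (auto simp: B_def)
  qed (simp add: B_def)
  have "real q * sqrt (X ^ m) \<le> (\<Sum>j<q. 2 * k * card (heavy_paths r (B j)))"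
    using sum_mono[of "{..<q}" "\<lambda>_. sqrt (X ^ m)"] block by simp
  also have "\<dots> = k * real (2 * (\<Sum>j<q. card (heavy_paths r (B j))))"
    by (simp add: sum_distrib_left algebra_simps)
  also have "\<dots> \<le> k * real (rsize r + 1)"
    using heavy_paths_card_sum[of "{..<q}" B r] disjoint
    by (intro mult_left_mono) (simp_all only: of_nat_le_iff, simp_all)
  finally show ?thesis
    unfolding q_def .
qed

section \<open>The final estimate\<close>

lemma log_sq_exponent_le:
  fixes M :: real
  assumes "10 \<le> M"
  shows "12 * M + 13 + (6 * M + 5) ^ 2 / 7200 \<le> 3 / 2 * M ^ 2"
proof -
  have "(6 * M + 5) ^ 2 \<le> (7 * M) ^ 2"
    using assms by (intro power_mono) auto
  then have "(6 * M + 5) ^ 2 \<le> 49 * M ^ 2"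
    by (simp add: power_mult_distrib)
  moreover have "10 * M \<le> M ^ 2"
    using assms by (simp add: power2_eq_square mult_right_mono)
  ultimately show ?thesis
    using assms by linarith
qed

lemma two_powr_log_sq_le_small:
  assumes "1 \<le> k" "k < 2 powr 59"
  shows "2 powr (log 2 k ^ 2 / 7200) \<le> 3 / 2"
proof -
  have "0 \<le> log 2 k" "log 2 k < 59"
    using assms by (simp_all add: log_less_iff)
  then have "log 2 k ^ 2 / 7200 \<le> 1 / 2"
    using power_mono[of "log 2 k" 59 2] by simp
  then have "2 powr (log 2 k ^ 2 / 7200) \<le> sqrt 2"
    by (simp add: powr_half_sqrt[symmetric])
  also have "sqrt 2 \<le> 3 / 2"
    by (rule real_le_lsqrt) (simp_all add: power2_eq_square)
  finally show ?thesis .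
qed

lemma two_powr_log_sq_le_large:
  fixes k m :: nat
  assumes "1 \<le> k" "2 * k < 64 ^ (m + 1)" "10 \<le> m"
  shows "8 * real k ^ 2 * 2 powr (log 2 k ^ 2 / 7200) \<le> 2 powr (3 / 2 * real m ^ 2)"
proof -
  define t where "t = log 2 k"
  define M where "M = real m"
  have "real (2 * k) < real (64 ^ (m + 1))"
    using assms(2) by (simp only: of_nat_less_iff)
  also have "\<dots> = (2::real) ^ (6 * (m + 1))"
    by (simp only: power_mult of_nat_power) simp
  also have "\<dots> = 2 powr (6 * M + 6)"
    by (subst powr_realpow[symmetric]) (auto simp: M_def add.commute)
  finally have "real k < 2 powr (6 * M + 5)"
    by (simp add: powr_add)
  then have t: "0 \<le> t" "t < 6 * M + 5"
    using assms(1) by (simp_all add: t_def log_less_iff)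
  have k: "real k = 2 powr t"
    using assms(1) by (simp add: t_def)
  have "8 * real k ^ 2 * 2 powr (t ^ 2 / 7200) = 2 powr 3 * (2 powr t * 2 powr t) * 2 powr (t ^ 2 / 7200)"
    by (simp add: k power2_eq_square)
  also have "\<dots> = 2 powr (3 + 2 * t + t ^ 2 / 7200)"
    by (simp only: powr_add mult_2 mult.assoc)
  also have "\<dots> \<le> 2 powr (12 * M + 13 + (6 * M + 5) ^ 2 / 7200)"
  proof -
    have "t ^ 2 \<le> (6 * M + 5) ^ 2"
      using t by (intro power_mono) auto
    then have "3 + 2 * t + t ^ 2 / 7200 \<le> 12 * M + 13 + (6 * M + 5) ^ 2 / 7200"
      using t by linarith
    then show ?thesis
      by simp
  qed
  also have "\<dots> \<le> 2 powr (3 / 2 * M ^ 2)"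
    using log_sq_exponent_le[of M] assms(3) by (simp add: M_def)
  finally show ?thesis
    unfolding t_def M_def .
qed

lemma sqrt_of_nat_8_pow_pow: "sqrt (real ((8 ^ m) ^ m)) = 2 powr (3 / 2 * real m ^ 2)"
proof -
  have "((8::nat) ^ m) ^ m = 2 ^ (3 * m * m)"
    by (simp add: power_mult flip: power_mult[of 2 3] mult.assoc)
  then have "real ((8 ^ m) ^ m) = (2::real) ^ (3 * m * m)"
    by (metis of_nat_numeral of_nat_power)
  also have "\<dots> = 2 powr (real (3 * m * m))"
    by (rule powr_realpow[symmetric]) simp
  finally show ?thesis
    by (simp add: powr_half_sqrt_powr[symmetric] power2_eq_square powr_powr mult.assoc)
qed

lemma lower_bound_small:
  fixes n k R :: nat
  assumes "1 \<le> k" "real k < 2 powr 59" "2 \<le> n" "2 * n \<le> R + 1"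
  shows "real n * 2 powr (log 2 k ^ 2 / 7200) \<le> real R"
proof -
  have "real n * 2 powr (log 2 k ^ 2 / 7200) \<le> real n * (3 / 2)"
    using assms(1,2) by (intro mult_left_mono two_powr_log_sq_le_small) auto
  then show ?thesis
    using assms(3,4) by linarith
qed

lemma le_four_mult_div:
  fixes n k :: nat
  assumes "1 \<le> k" "2 * k \<le> n"
  shows "n \<le> 4 * k * (n div (2 * k))"
proof -
  define q where "q = n div (2 * k)"
  have "1 \<le> q"
    using assms by (simp add: q_def Suc_le_eq div_greater_zero_iff)
  have "n = q * (2 * k) + n mod (2 * k)"
    unfolding q_def by (rule div_mult_mod_eq[symmetric])
  moreover have "n mod (2 * k) < 2 * k"
    using assms(1) by simp
  ultimately have "n < (q + 1) * (2 * k)"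
    by simp
  also have "\<dots> \<le> (2 * q) * (2 * k)"
    using \<open>1 \<le> q\<close> by (intro mult_le_mono1) simp
  finally show ?thesis
    by (simp add: q_def algebra_simps)
qed

lemma lower_bound_large:
  fixes n k R m :: nat
  assumes "1 \<le> k" "2 * k \<le> n" "10 \<le> m" "2 * k < 64 ^ (m + 1)"
    and block: "real (n div (2 * k)) * 2 powr (3 / 2 * real m ^ 2) \<le> real k * real (R + 1)"
  shows "real n * 2 powr (log 2 k ^ 2 / 7200) \<le> real R"
proof -
  define P where "P = 2 powr (log 2 k ^ 2 / 7200)"
  define q where "q = n div (2 * k)"
  have n: "real n \<le> 4 * real k * real q"
    using le_four_mult_div[OF assms(1,2)] unfolding q_def
    by (metis of_nat_le_iff of_nat_mult of_nat_numeral)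
  have "real n * (8 * real k ^ 2 * P) \<le> real n * 2 powr (3 / 2 * real m ^ 2)"
    using two_powr_log_sq_le_large[OF assms(1,4,3)] unfolding P_def by (rule mult_left_mono) simp
  also have "\<dots> \<le> 4 * real k * real q * 2 powr (3 / 2 * real m ^ 2)"
    using n by (intro mult_right_mono) auto
  also have "\<dots> = 4 * real k * (real q * 2 powr (3 / 2 * real m ^ 2))"
    by (simp only: mult.assoc)
  also have "\<dots> \<le> 4 * real k * (real k * real (R + 1))"
    using block by (intro mult_left_mono) (auto simp: q_def)
  finally have "(4 * real k ^ 2) * (2 * (real n * P)) \<le> (4 * real k ^ 2) * real (R + 1)"
    by (simp add: power2_eq_square mult_ac)
  then have "2 * (real n * P) \<le> real R + 1"
    using assms(1) by (subst (asm) mult_le_cancel_left_pos) auto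
  moreover have "1 \<le> real n * P"
    using assms(1,2) unfolding P_def by (intro mult_ge1_I ge_one_powr_ge_zero) auto
  ultimately show ?thesis
    unfolding P_def by linarith
qed

text \<open>For \<open>2 * k < 64 ^ 10\<close> the factor \<open>k powr (log 2 k / 7200)\<close> is below \<open>3 / 2\<close> and the
  singleton bound suffices. Otherwise the blocks with \<open>X = 8 ^ m\<close>, where
  \<open>64 ^ m \<le> 2 * k < 64 ^ (m + 1)\<close>, gain a factor \<open>2 powr (3 / 2 * m ^ 2)\<close>, which absorbs
  \<open>8 * k ^ 2 * k powr (log 2 k / 7200)\<close> as soon as \<open>m \<ge> 10\<close>.\<close>

lemma lower_bound_from_block_bounds:
  fixes n k R :: nat
  assumes k: "1 \<le> k" "2 * k \<le> n" and singles: "2 * n \<le> R + 1"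
    and blocks: "\<And>m X. 8 \<le> X \<Longrightarrow> 8 ^ m * X \<le> 2 * k \<Longrightarrow>
                   real (n div (2 * k)) * sqrt (X ^ m) \<le> real k * real (R + 1)"
  shows "real n * real k powr (1 / 7200 * log 2 (real k)) \<le> real R"
proof -
  have "real k powr (1 / 7200 * log 2 k) = (2 powr log 2 k) powr (log 2 k / 7200)"
    using k by simp
  then have k_powr: "real k powr (1 / 7200 * log 2 k) = 2 powr (log 2 k ^ 2 / 7200)"
    by (simp add: powr_powr power2_eq_square)
  show ?thesis
  proof (cases "2 * k < 64 ^ 10")
    case True
    then have "real k < 2 powr 59"
      by simp
    then show ?thesis
      unfolding k_powr using lower_bound_small k singles by simp
  next
    case False
    obtain m where m: "64 ^ m \<le> 2 * k" "2 * k < 64 ^ (m + 1)"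
      using ex_power_ivl1[of 64 "2 * k"] k by auto
    have "10 \<le> m"
      using False m(2) power_increasing[of "m + 1" 10 "64::nat"] by fastforce
    have "(8::nat) \<le> 8 ^ m"
      using power_increasing[of 1 m "8::nat"] \<open>10 \<le> m\<close> by simp
    moreover have "8 ^ m * 8 ^ m \<le> 2 * k"
      using m(1) by (simp flip: power_mult_distrib)
    ultimately have "real (n div (2 * k)) * sqrt (real ((8 ^ m) ^ m)) \<le> real k * real (R + 1)"
      by (rule blocks)
    then show ?thesis
      unfolding k_powr sqrt_of_nat_8_pow_pow using lower_bound_large k \<open>10 \<le> m\<close> m(2) by blast
  qed
qed

section \<open>An expression for \<open>Bstar n k\<close>\<close>

definition any_word :: "bool rexp" where
  "any_word = Star (Plus (Lit True) (Lit False))"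

lemma lang_any_word: "lang any_word = UNIV"
proof -
  have "v = concat (map (\<lambda>x. [x]) v)" for v :: "bool list"
    by (induction v) auto
  moreover have "set (map (\<lambda>x. [x]) v) \<subseteq> {[True], [False]}" for v :: "bool list"
    by auto
  ultimately have "v \<in> kleene {[True], [False]}" for v :: "bool list"
    unfolding kleene_def by blast
  then show ?thesis
    by (auto simp: any_word_def insert_commute)
qed

fun at_least :: "nat \<Rightarrow> nat \<Rightarrow> bool rexp" where
  "at_least 0 0 = any_word"
| "at_least (Suc i) 0 = Times any_word (Times (Lit True) (at_least i 0))"
| "at_least 0 (Suc j) = Times any_word (Times (Lit False) (at_least 0 j))"
| "at_least (Suc i) (Suc j) =
     Plus (Times (Lit True) (at_least i (Suc j))) (Times (Lit False) (at_least (Suc i) j))"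

lemma Suc_le_occ_iff: "Suc i \<le> occ v a \<longleftrightarrow> (\<exists>u w. v = u @ a # w \<and> i \<le> occ w a)"
proof
  assume "Suc i \<le> occ v a"
  then have "filter (\<lambda>x. x = a) v \<noteq> []"
    by (auto simp: occ_def)
  then have "a \<in> set v"
    by (auto simp: filter_empty_conv)
  then obtain u w where "v = u @ a # w" "a \<notin> set u"
    by (metis split_list_first)
  moreover from this have "occ u a = 0"
    by (auto simp: occ_def filter_empty_conv)
  ultimately show "\<exists>u w. v = u @ a # w \<and> i \<le> occ w a"
    using \<open>Suc i \<le> occ v a\<close> by auto
qed auto

lemma lang_at_least: "lang (at_least i j) = {v. i \<le> occ v True \<and> j \<le> occ v False}"
proof (induction i j rule: at_least.induct)
  case 1
  then show ?case by (simp add: lang_any_word)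
next
  case (2 i)
  then show ?case by (auto simp: conc_def lang_any_word Suc_le_occ_iff)
next
  case (3 j)
  then show ?case by (auto simp: conc_def lang_any_word Suc_le_occ_iff)
next
  case (4 i j)
  show ?case
  proof (intro set_eqI iffI)
    fix v
    assume "v \<in> {v. Suc i \<le> occ v True \<and> Suc j \<le> occ v False}"
    then obtain a v' where "v = a # v'"
      by (cases v) auto
    then show "v \<in> lang (at_least (Suc i) (Suc j))"
      using 4 \<open>v \<in> _\<close> by (cases a) (auto simp: conc_def)
  qed (use 4 in \<open>auto simp: conc_def\<close>)
qed

lemma rpn_attained: "\<exists>r. lang r = Bstar n k \<and> rsize r = rpn (Bstar n k)"
proof -
  have "lang (at_least k (n - k)) = Bstar n k"
    by (simp add: lang_at_least Bstar_def)
  then have "\<exists>m r. lang r = Bstar n k \<and> rsize r = m"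
    by blast
  then show ?thesis
    unfolding rpn_def by (rule LeastI_ex)
qed

theorem corollary8p5:
  shows "\<exists>c>0. \<forall>n k::nat. 1 \<le> k \<and> 2 * k \<le> n \<longrightarrow>
           real (rpn (Bstar n k)) \<ge> real n * real k powr (c * log 2 (real k))"
proof (intro exI[of _ "1 / 7200"] conjI allI impI)
  fix n k :: nat
  assume k: "1 \<le> k \<and> 2 * k \<le> n"
  obtain r where r: "lang r = Bstar n k" "rsize r = rpn (Bstar n k)"
    using rpn_attained by blast
  have singles: "2 * n \<le> rsize r + 1"
    using rsize_ge_twice_length[OF r(1)] k by simp
  have blocks: "real (n div (2 * k)) * sqrt (X ^ m) \<le> real k * real (rsize r + 1)"
    if "8 \<le> X" "8 ^ m * X \<le> 2 * k" for m X
    using rsize_ge_blocks[OF r(1) _ that] k by blast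
  have "real n * real k powr (1 / 7200 * log 2 (real k)) \<le> real (rsize r)"
    using lower_bound_from_block_bounds[OF _ _ singles blocks] k by blast
  then show "real n * real k powr (1 / 7200 * log 2 (real k)) \<le> real (rpn (Bstar n k))"
    unfolding r(2) .
qed simp

end
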